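(* Let $\alpha,\beta\in\mathbb{C}$ be not both zero, let $\ell(x,y)=\alpha x+\beta y$, and let $$H(x,y)=\tfrac12 a_1x^2+a_2xy+\tfrac12 a_3y^2+a_4x+a_5y$$ with coefficients $a_1,\dots,a_5$. Consider the Hamiltonian vector field $$f(x,y)=\ell(x,y)\begin{pmatrix}\partial H/\partial y\\ -\partial H/\partial x\end{pmatrix},$$ and its Kahan map $\Phi_f$ (with step $\varepsilon=1$). Set $\gamma_1=a_2^2-a_1a_3$, $\gamma_2=a_3a_4^2+a_1a_5^2-2a_2a_4a_5$, $C(x,y)=H(x,y)-\tfrac12\gamma_2\ell^2(x,y)$, $D(x,y)=1-\gamma_1\ell^2(x,y)$, and let $\mathfrak E$ be the pencil of conics $\mathcal E_\lambda=\{(x,y): C(x,y)-\lambda D(x,y)=0\}$, where the conic $C(x,y)=0$ is assumed nonsingular. Then $$\Phi_f=I_{\mathfrak E,B_\infty}\circ I_{\mathfrak E,B_0},$$ where $B_\infty=[-\beta:\alpha:0]$ is the point at infinity of the line $\ell(x,y)=0$ and $$B_0=\rho(-\beta,\alpha),\qquad \rho=\frac{1+(\beta a_4-\alpha a_5)}{\beta^2a_1-2\alpha\beta a_2+\alpha^2a_3}$$ (both points lie on the line $\ell(x,y)=0$).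
   Context: Kahan discretization: for a quadratic vector field $f(x)=Q(x)+Bx+c$ on $\mathbb{C}^n$ (each component of $Q$ a quadratic form, $B$ a matrix, $c$ a vector), the Kahan map $\widetilde x=\Phi_f(x)$ (step $\varepsilon=1$) is defined by $\frac{\widetilde x-x}{2}=Q(x,\widetilde x)+\frac12B(x+\widetilde x)+c$, where $Q(x,\widetilde x)=\frac12(Q(x+\widetilde x)-Q(x)-Q(\widetilde x))$; explicitly $\Phi_f(x)=x+2(I-f'(x))^{-1}f(x)$ with $f'$ the Jacobi matrix. It is a birational map. Switches: for a nonsingular conic $\mathcal E$ and a point $B\notin\mathcal E$ (possibly a point at infinity of $\mathbb{C}P^2$), the $B$-switch $I_{\mathcal E,B}:\mathcal E\to\mathcal E$ sends $P\in\mathcal E$ to the second intersection point of $\mathcal E$ with the line $(BP)$. For a pencil $\mathfrak E=\{\mathcal E_\lambda\}$ of conics, the $B$-switch $I_{\mathfrak E,B}:\mathbb{C}^2\dashrightarrow\mathbb{C}^2$ is the birational map sending a non-base point $P$ to $I_{\mathcal E_\lambda,B}(P)$, where $\mathcal E_\lambda$ is the unique conic of the pencil through $P$. *)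

theory Defs
  imports "HOL-Analysis.Analysis"
begin

type_synonym point = "complex \<times> complex"

definition pt_add :: "point \<Rightarrow> point \<Rightarrow> point" where
  "pt_add P Q = (fst P + fst Q, snd P + snd Q)"

definition pt_scale :: "complex \<Rightarrow> point \<Rightarrow> point" where
  "pt_scale k P = (k * fst P, k * snd P)"

definition pt_sub :: "point \<Rightarrow> point \<Rightarrow> point" where
  "pt_sub P Q = pt_add P (pt_scale (-1) Q)"

text \<open>Kahan discretization (step 1) of a quadratic vector field f = Q + B + c on C^2.
  The parts are recovered from f:  c = f 0,  B u = (f u - f(-u))/2,
  Q u = (f u + f(-u))/2 - f 0  (valid for quadratic f).\<close>

definition vf_const :: "(point \<Rightarrow> point) \<Rightarrow> point" where
  "vf_const f = f (0, 0)"

definition vf_lin :: "(point \<Rightarrow> point) \<Rightarrow> point \<Rightarrow> point" where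
  "vf_lin f u = pt_scale (1/2) (pt_sub (f u) (f (pt_scale (-1) u)))"

definition vf_quad :: "(point \<Rightarrow> point) \<Rightarrow> point \<Rightarrow> point" where
  "vf_quad f u = pt_sub (pt_scale (1/2) (pt_add (f u) (f (pt_scale (-1) u)))) (vf_const f)"

definition vf_polar :: "(point \<Rightarrow> point) \<Rightarrow> point \<Rightarrow> point \<Rightarrow> point" where
  "vf_polar f x y =
     pt_scale (1/2) (pt_sub (pt_sub (vf_quad f (pt_add x y)) (vf_quad f x)) (vf_quad f y))"

definition kahan_eq :: "(point \<Rightarrow> point) \<Rightarrow> point \<Rightarrow> point \<Rightarrow> bool" where
  "kahan_eq f x xt \<longleftrightarrow>
     pt_scale (1/2) (pt_sub xt x) =
     pt_add (pt_add (vf_polar f x xt) (pt_scale (1/2) (vf_lin f (pt_add x xt)))) (vf_const f)"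

definition kahan_defined :: "(point \<Rightarrow> point) \<Rightarrow> point \<Rightarrow> bool" where
  "kahan_defined f x \<longleftrightarrow> (\<exists>!xt. kahan_eq f x xt)"

definition kahan_map :: "(point \<Rightarrow> point) \<Rightarrow> point \<Rightarrow> point" where
  "kahan_map f x = (THE xt. kahan_eq f x xt)"

text \<open>Conics: q(x,y) = c11 x^2 + 2 c12 x y + c22 y^2 + 2 c13 x + 2 c23 y + c33;
  nonsingular iff the symmetric 3x3 matrix of its homogenization has nonzero determinant.\<close>

definition conic_nonsingular :: "(point \<Rightarrow> complex) \<Rightarrow> bool" where
  "conic_nonsingular q \<longleftrightarrow>
     (\<exists>c11 c12 c22 c13 c23 c33.
        (\<forall>x y. q (x, y) = c11*x^2 + 2*c12*x*y + c22*y^2 + 2*c13*x + 2*c23*y + c33) \<and>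
        c11*(c22*c33 - c23*c23) - c12*(c12*c33 - c23*c13) + c13*(c12*c23 - c22*c13) \<noteq> 0)"

text \<open>Pencil of conics C - \<lambda> D = 0 (including \<lambda> = \<infinity>, the conic D = 0).
  The member through a non-base point P is the zero set of  D(P) C - C(P) D.\<close>
definition pencil_member_through :: "(point \<Rightarrow> complex) \<Rightarrow> (point \<Rightarrow> complex) \<Rightarrow> point \<Rightarrow> point \<Rightarrow> complex" where
  "pencil_member_through C D P X = D P * C X - C P * D X"

text \<open>A point B of CP^2 in homogeneous coordinates (b1, b2, b3) (b3 = 0: point at infinity).
  The line (BP) through an affine point P is {P + t v}, v the direction below.\<close>
definition line_dir :: "complex \<times> complex \<times> complex \<Rightarrow> point \<Rightarrow> point" where
  "line_dir B P = (case B of (b1, b2, b3) \<Rightarrow> (b1 - b3 * fst P, b2 - b3 * snd P))"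

text \<open>Q is the second intersection point of the line (BP) with the conic of the pencil through P:
  restricted to the line, the conic equation is a genuine quadratic A t (t - t0) in the line
  parameter (root t = 0 is P), and Q is the point with parameter t0 (Q = P in the tangent case).\<close>
definition switch_rel :: "(point \<Rightarrow> complex) \<Rightarrow> (point \<Rightarrow> complex) \<Rightarrow> complex \<times> complex \<times> complex
    \<Rightarrow> point \<Rightarrow> point \<Rightarrow> bool" where
  "switch_rel C D B P Q \<longleftrightarrow>
     (\<exists>A t0. A \<noteq> 0 \<and>
        (\<forall>t. pencil_member_through C D P (pt_add P (pt_scale t (line_dir B P))) = A * t * (t - t0)) \<and>
        Q = pt_add P (pt_scale t0 (line_dir B P)))"

definition switch_defined :: "(point \<Rightarrow> complex) \<Rightarrow> (point \<Rightarrow> complex) \<Rightarrow> complex \<times> complex \<times> complex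
    \<Rightarrow> point \<Rightarrow> bool" where
  "switch_defined C D B P \<longleftrightarrow> (\<exists>Q. switch_rel C D B P Q)"

definition switch_map :: "(point \<Rightarrow> complex) \<Rightarrow> (point \<Rightarrow> complex) \<Rightarrow> complex \<times> complex \<times> complex
    \<Rightarrow> point \<Rightarrow> point" where
  "switch_map C D B P = (THE Q. switch_rel C D B P Q)"

end

theory Submission
  imports Defs "HOL-Computational_Algebra.Polynomial"
begin

(* Let v = (-beta, alpha) be the direction of the line l = 0 and w = d_v H the derivative of H
   along v. Since H_vv = beta^2 a1 - 2 alpha beta a2 + alpha^2 a3 is nonzero, (u, w) = (l, d_v H)
   are affine coordinates on C^2, and in them everything is elementary: the vector field reads
   u' = u w, w' = u (gamma1 u - kappa); the B_inf-switch is (u, w) |-> (u, -w); B0 is the point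
   u = 0, w = 1, so the B0-switch moves (u, w) to ((1 - t) u, (1 - t) w + t); and
   2 H_vv C = w^2 - (1 - kappa u)^2 + const * D, so this conic and D span the pencil.
   For the composite of the two switches the l-component of the Kahan equation holds for every t,
   and its w-component holds for the parameter t of the second intersection point, by a
   single polynomial identity in u and w.  Density: the points with D ~= 0 are dense, and through
   each of them three conditions sufficient for membership in the domain are nonzero polynomials
   of degree at most 2 in w along the line parallel to l = 0. *)

lemma switch_rel_iff_restriction:
  assumes restr: "\<And>t. pencil_member_through C D P (pt_add P (pt_scale t (line_dir B P))) = k1*t + k2*t^2"
  shows "switch_rel C D B P Q \<longleftrightarrow> k2 \<noteq> 0 \<and> Q = pt_add P (pt_scale (-k1/k2) (line_dir B P))"
proof
  assume "switch_rel C D B P Q"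
  then obtain A t0 where "A \<noteq> 0" and Q: "Q = pt_add P (pt_scale t0 (line_dir B P))"
    and factored: "\<And>t. pencil_member_through C D P (pt_add P (pt_scale t (line_dir B P))) = A * t * (t - t0)"
    unfolding switch_rel_def by blast
  have "k1 + k2 = A * (1 - t0)" and "-k1 + k2 = A * (1 + t0)"
    using factored[of 1] factored[of "-1"] restr[of 1] restr[of "-1"] by (simp_all add: algebra_simps)
  then have "k2 = A" and "k1 = - A * t0" by algebra+
  with \<open>A \<noteq> 0\<close> Q show "k2 \<noteq> 0 \<and> Q = pt_add P (pt_scale (-k1/k2) (line_dir B P))" by simp
next
  assume "k2 \<noteq> 0 \<and> Q = pt_add P (pt_scale (-k1/k2) (line_dir B P))"
  then show "switch_rel C D B P Q"
    unfolding switch_rel_def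
    by (intro exI[of _ k2] exI[of _ "-k1/k2"]) (simp add: restr field_simps power2_eq_square)
qed

lemma
  assumes "\<And>t. pencil_member_through C D P (pt_add P (pt_scale t (line_dir B P))) = k1*t + k2*t^2"
  shows switch_defined_iff_restriction: "switch_defined C D B P \<longleftrightarrow> k2 \<noteq> 0"
    and switch_map_eq_restriction:
      "k2 \<noteq> 0 \<Longrightarrow> switch_map C D B P = pt_add P (pt_scale (-k1/k2) (line_dir B P))"
  unfolding switch_defined_def switch_map_def switch_rel_iff_restriction[OF assms] by auto

lemma kahan_rhs_product_field:
  assumes f: "\<And>p. f p = pt_scale (l p) (F p)"
    and l: "\<And>x y. l (x, y) = l0 + l1*x + l2*y"
    and F: "\<And>x y. F (x, y) = (c0 + c1*x + c2*y, d0 + d1*x + d2*y)"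
  shows "pt_add (pt_add (vf_polar f P Z) (pt_scale (1/2) (vf_lin f (pt_add P Z)))) (vf_const f)
    = pt_scale (1/2) (pt_add (pt_scale (l P) (F Z)) (pt_scale (l Z) (F P)))"
proof -
  obtain x y X Y where "P = (x, y)" "Z = (X, Y)" by fastforce
  then show ?thesis
    unfolding vf_polar_def vf_lin_def vf_quad_def vf_const_def pt_add_def pt_scale_def pt_sub_def
    by (simp add: f l F pt_scale_def) (simp add: field_simps power2_eq_square; algebra)
qed

lemma kahan_eq_product_field_iff:
  assumes "\<And>p. f p = pt_scale (l p) (F p)"
    and "\<And>x y. l (x, y) = l0 + l1*x + l2*y"
    and "\<And>x y. F (x, y) = (c0 + c1*x + c2*y, d0 + d1*x + d2*y)"
  shows "kahan_eq f P Z \<longleftrightarrow> pt_sub Z P = pt_add (pt_scale (l P) (F Z)) (pt_scale (l Z) (F P))"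
  unfolding kahan_eq_def kahan_rhs_product_field[OF assms]
  by (simp add: pt_scale_def prod_eq_iff)

lemma pt_eq_iff_pt_sub_zero: "p = q \<longleftrightarrow> pt_sub p q = (0, 0)"
  by (cases p; cases q) (simp add: pt_sub_def pt_add_def pt_scale_def)

lemma kahan_map_eqI: "kahan_defined f P \<Longrightarrow> kahan_eq f P Z \<Longrightarrow> kahan_map f P = Z"
  unfolding kahan_defined_def kahan_map_def by (rule the1_equality)

lemma finite_zeros_quadratic:
  fixes q :: "complex \<Rightarrow> complex"
  assumes "\<And>z. q z = a*z^2 + b*z + c" and "a \<noteq> 0 \<or> b \<noteq> 0 \<or> c \<noteq> 0"
  shows "finite {z. q z = 0}"
proof -
  have "[:c, b, a:] \<noteq> 0" using assms(2) by auto
  then have "finite {z. poly [:c, b, a:] z = 0}" by (rule poly_roots_finite)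
  then show ?thesis by (simp add: assms(1) algebra_simps power2_eq_square)
qed

lemma in_closure_if_finite_exceptions_on_line:
  assumes "finite {s. pt_add P (pt_scale s d) \<notin> S}"
  shows "P \<in> closure S"
proof (rule Lim_in_closed_set[of "closure S" "\<lambda>s. pt_add P (pt_scale s d)" "at 0"])
  have "\<forall>\<^sub>F s in at 0. \<forall>c\<in>{s. pt_add P (pt_scale s d) \<notin> S}. s \<noteq> c"
    using assms by (intro eventually_ball_finite) (auto intro: eventually_neq_at_within)
  then show "\<forall>\<^sub>F s in at 0. pt_add P (pt_scale s d) \<in> closure S"
    by eventually_elim (use closure_subset in auto)
  show "((\<lambda>s. pt_add P (pt_scale s d)) \<longlongrightarrow> P) (at 0)"
    unfolding pt_add_def pt_scale_def by (cases P) (auto intro!: tendsto_eq_intros)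
qed simp_all

locale ell_hamiltonian =
  fixes \<alpha> \<beta> a1 a2 a3 a4 a5 :: complex
  assumes nondegenerate: "\<beta>^2*a1 - 2*\<alpha>*\<beta>*a2 + \<alpha>^2*a3 \<noteq> 0"
begin

definition ell :: "point \<Rightarrow> complex" where
  "ell p = \<alpha> * fst p + \<beta> * snd p"

definition ham :: "point \<Rightarrow> complex" where
  "ham p = a1/2 * fst p^2 + a2 * fst p * snd p + a3/2 * snd p^2 + a4 * fst p + a5 * snd p"

definition ham_field :: "point \<Rightarrow> point" where
  "ham_field p = (a2 * fst p + a3 * snd p + a5, - (a1 * fst p + a2 * snd p + a4))"

definition ell_ham_field :: "point \<Rightarrow> point" where
  "ell_ham_field p = pt_scale (ell p) (ham_field p)"

definition line_vec :: point where
  "line_vec = (-\<beta>, \<alpha>)"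

definition dvH :: "point \<Rightarrow> complex" where
  "dvH p = ell (ham_field p)"

definition dvH_lin :: "point \<Rightarrow> complex" where
  "dvH_lin q = (\<alpha>*a2 - \<beta>*a1) * fst q + (\<alpha>*a3 - \<beta>*a2) * snd q"

definition dvvH :: complex where
  "dvvH = \<beta>^2*a1 - 2*\<alpha>*\<beta>*a2 + \<alpha>^2*a3"

definition \<gamma>\<^sub>1 :: complex where
  "\<gamma>\<^sub>1 = a2^2 - a1*a3"

definition \<gamma>\<^sub>2 :: complex where
  "\<gamma>\<^sub>2 = a3*a4^2 + a1*a5^2 - 2*a2*a4*a5"

definition \<kappa> :: complex where
  "\<kappa> = a4*(\<alpha>*a3 - \<beta>*a2) - a5*(\<alpha>*a2 - \<beta>*a1)"

definition Dl :: "complex \<Rightarrow> complex" where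
  "Dl u = 1 - \<gamma>\<^sub>1 * u^2"

definition pencil_C :: "point \<Rightarrow> complex" where
  "pencil_C p = ham p - \<gamma>\<^sub>2/2 * ell p^2"

definition pencil_D :: "point \<Rightarrow> complex" where
  "pencil_D p = Dl (ell p)"

definition conic :: "complex \<Rightarrow> complex \<Rightarrow> complex" where
  "conic u w = w^2 - (1 - \<kappa>*u)^2"

definition \<rho>\<^sub>0 :: complex where
  "\<rho>\<^sub>0 = (1 + (\<beta>*a4 - \<alpha>*a5)) / dvvH"

definition B_zero :: "complex \<times> complex \<times> complex" where
  "B_zero = (\<rho>\<^sub>0 * (-\<beta>), \<rho>\<^sub>0 * \<alpha>, 1)"

definition B_infty :: "complex \<times> complex \<times> complex" where
  "B_infty = (-\<beta>, \<alpha>, 0)"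

lemma dvvH_nonzero: "dvvH \<noteq> 0"
  using nondegenerate by (simp add: dvvH_def)

lemma ell_pt_add [simp]: "ell (pt_add p q) = ell p + ell q"
  and ell_pt_scale [simp]: "ell (pt_scale c p) = c * ell p"
  and ell_pt_sub [simp]: "ell (pt_sub p q) = ell p - ell q"
  and dvH_lin_pt_add [simp]: "dvH_lin (pt_add p q) = dvH_lin p + dvH_lin q"
  and dvH_lin_pt_scale [simp]: "dvH_lin (pt_scale c p) = c * dvH_lin p"
  and dvH_pt_add: "dvH (pt_add p q) = dvH p + dvH_lin q"
  and dvH_lin_pt_sub: "dvH_lin (pt_sub p q) = dvH_lin p - dvH_lin q"
  and dvH_lin_pt_sub_eq_dvH: "dvH_lin (pt_sub p q) = dvH p - dvH q"
  and dvH_lin_diff: "dvH_lin p - dvH_lin q = dvH p - dvH q"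
  by (simp_all add: ell_def dvH_lin_def dvH_def ham_field_def pt_sub_def pt_add_def pt_scale_def;
      algebra)+

lemma ell_line_vec [simp]: "ell line_vec = 0"
  and dvH_lin_line_vec [simp]: "dvH_lin line_vec = dvvH"
  and dvH_lin_ham_field [simp]: "dvH_lin (ham_field p) = \<gamma>\<^sub>1 * ell p - \<kappa>"
  by (simp_all add: ell_def line_vec_def dvH_lin_def dvvH_def ham_field_def \<gamma>\<^sub>1_def \<kappa>_def; algebra)+

lemma zero_iff_ell_dvH_lin: "q = (0, 0) \<longleftrightarrow> ell q = 0 \<and> dvH_lin q = 0"
proof (cases q)
  case (Pair x y)
  have "dvvH * x = (\<alpha>*a3 - \<beta>*a2) * ell q - \<beta> * dvH_lin q"
    and "dvvH * y = \<alpha> * dvH_lin q - (\<alpha>*a2 - \<beta>*a1) * ell q"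
    unfolding Pair ell_def dvH_lin_def dvvH_def by (simp; algebra)+
  then show ?thesis using dvvH_nonzero by (auto simp: Pair ell_def dvH_lin_def)
qed

lemma point_eq_iff_coords: "p = q \<longleftrightarrow> ell p = ell q \<and> dvH p = dvH q"
  by (simp add: pt_eq_iff_pt_sub_zero[of p] zero_iff_ell_dvH_lin dvH_lin_pt_sub_eq_dvH)

lemma twice_dvvH_pencil_C:
  "2 * dvvH * pencil_C p = conic (ell p) (dvH p) + (1 - dvH (0, 0)^2) * pencil_D p"
  unfolding pencil_C_def pencil_D_def Dl_def conic_def ham_def dvH_def ell_def ham_field_def
    dvvH_def \<gamma>\<^sub>1_def \<gamma>\<^sub>2_def \<kappa>_def
  by (simp add: field_simps; algebra)

lemma pencil_member_through_conic:
  "pencil_member_through pencil_C pencil_D P Q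
    = (Dl (ell P) * conic (ell Q) (dvH Q) - conic (ell P) (dvH P) * Dl (ell Q)) / (2 * dvvH)"
proof -
  have "2 * dvvH * pencil_member_through pencil_C pencil_D P Q
      = pencil_D P * (2 * dvvH * pencil_C Q) - (2 * dvvH * pencil_C P) * pencil_D Q"
    by (simp add: pencil_member_through_def algebra_simps)
  also have "\<dots> = Dl (ell P) * conic (ell Q) (dvH Q) - conic (ell P) (dvH P) * Dl (ell Q)"
    unfolding twice_dvvH_pencil_C by (simp add: pencil_D_def algebra_simps)
  finally show ?thesis using dvvH_nonzero by (simp add: field_simps)
qed

definition pencil_lin :: "complex \<Rightarrow> complex \<Rightarrow> complex" where
  "pencil_lin u w = Dl u * (2*w*(1 - w) - 2*\<kappa>*u*(1 - \<kappa>*u)) - 2*\<gamma>\<^sub>1*u^2 * conic u w"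

definition pencil_quad :: "complex \<Rightarrow> complex \<Rightarrow> complex" where
  "pencil_quad u w = Dl u * ((1 - w)^2 - \<kappa>^2*u^2) + \<gamma>\<^sub>1*u^2 * conic u w"

lemma pencil_along_B_zero_line:
  "Dl u * conic ((1 - t) * u) (w + t * (1 - w)) - conic u w * Dl ((1 - t) * u)
    = pencil_lin u w * t + pencil_quad u w * t^2"
  unfolding pencil_lin_def pencil_quad_def Dl_def conic_def by algebra

lemma pencil_along_B_infty_line:
  "Dl u * conic u (w + t * dvvH) - conic u w * Dl u = 2 * dvvH * Dl u * w * t + dvvH^2 * Dl u * t^2"
  unfolding conic_def by algebra

lemma line_dir_B_zero: "line_dir B_zero P = pt_sub (pt_scale \<rho>\<^sub>0 line_vec) P"
  and line_dir_B_infty: "line_dir B_infty P = line_vec"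
  by (simp_all add: line_dir_def B_zero_def B_infty_def line_vec_def pt_sub_def pt_add_def pt_scale_def)

lemma dvH_B_zero: "dvH (pt_scale \<rho>\<^sub>0 line_vec) = 1"
proof -
  have "dvH (pt_scale \<rho>\<^sub>0 line_vec) = dvH (0, 0) + \<rho>\<^sub>0 * dvvH"
    using dvH_pt_add[of "(0, 0)" "pt_scale \<rho>\<^sub>0 line_vec"] by (simp add: pt_add_def)
  also have "dvH (0, 0) = \<alpha>*a5 - \<beta>*a4"
    by (simp add: dvH_def ell_def ham_field_def algebra_simps)
  also have "\<rho>\<^sub>0 * dvvH = 1 + (\<beta>*a4 - \<alpha>*a5)"
    using dvvH_nonzero by (simp add: \<rho>\<^sub>0_def)
  finally show ?thesis by simp
qed

lemma B_zero_line_coords: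
  "ell (pt_add P (pt_scale t (line_dir B_zero P))) = (1 - t) * ell P"
  "dvH (pt_add P (pt_scale t (line_dir B_zero P))) = dvH P + t * (1 - dvH P)"
  by (simp_all add: line_dir_B_zero dvH_pt_add dvH_lin_pt_sub_eq_dvH dvH_B_zero algebra_simps)

lemma B_infty_line_coords:
  "ell (pt_add P (pt_scale t (line_dir B_infty P))) = ell P"
  "dvH (pt_add P (pt_scale t (line_dir B_infty P))) = dvH P + t * dvvH"
  by (simp_all add: line_dir_B_infty dvH_pt_add)

lemma B_zero_switch_restriction:
  "pencil_member_through pencil_C pencil_D P (pt_add P (pt_scale t (line_dir B_zero P)))
    = pencil_lin (ell P) (dvH P) / (2 * dvvH) * t + pencil_quad (ell P) (dvH P) / (2 * dvvH) * t^2"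
  unfolding pencil_member_through_conic B_zero_line_coords pencil_along_B_zero_line
  by (simp add: add_divide_distrib)

lemma B_infty_switch_restriction:
  "pencil_member_through pencil_C pencil_D P (pt_add P (pt_scale t (line_dir B_infty P)))
    = Dl (ell P) * dvH P * t + Dl (ell P) * dvvH / 2 * t^2"
  unfolding pencil_member_through_conic B_infty_line_coords pencil_along_B_infty_line
  using dvvH_nonzero by (simp add: field_simps power2_eq_square)

definition B_zero_param :: "complex \<Rightarrow> complex \<Rightarrow> complex" where
  "B_zero_param u w = - pencil_lin u w / pencil_quad u w"

lemma switch_defined_B_zero_iff:
  "switch_defined pencil_C pencil_D B_zero P \<longleftrightarrow> pencil_quad (ell P) (dvH P) \<noteq> 0"
  using switch_defined_iff_restriction[OF B_zero_switch_restriction] dvvH_nonzero by simp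

lemma switch_map_B_zero_coords:
  assumes "pencil_quad (ell P) (dvH P) \<noteq> 0"
  defines "t \<equiv> B_zero_param (ell P) (dvH P)"
  shows "ell (switch_map pencil_C pencil_D B_zero P) = (1 - t) * ell P"
    and "dvH (switch_map pencil_C pencil_D B_zero P) = dvH P + t * (1 - dvH P)"
proof -
  have switch: "switch_map pencil_C pencil_D B_zero P = pt_add P (pt_scale t (line_dir B_zero P))"
    using switch_map_eq_restriction[OF B_zero_switch_restriction] assms dvvH_nonzero
    by (simp add: B_zero_param_def)
  show "ell (switch_map pencil_C pencil_D B_zero P) = (1 - t) * ell P"
    and "dvH (switch_map pencil_C pencil_D B_zero P) = dvH P + t * (1 - dvH P)"
    unfolding switch B_zero_line_coords by simp_all
qed

lemma switch_defined_B_infty_iff: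
  "switch_defined pencil_C pencil_D B_infty P \<longleftrightarrow> Dl (ell P) \<noteq> 0"
  using switch_defined_iff_restriction[OF B_infty_switch_restriction] dvvH_nonzero by simp

lemma switch_map_B_infty_coords:
  assumes "Dl (ell P) \<noteq> 0"
  shows "ell (switch_map pencil_C pencil_D B_infty P) = ell P"
    and "dvH (switch_map pencil_C pencil_D B_infty P) = - dvH P"
proof -
  have switch: "switch_map pencil_C pencil_D B_infty P
      = pt_add P (pt_scale (- 2 * dvH P / dvvH) (line_dir B_infty P))"
    using switch_map_eq_restriction[OF B_infty_switch_restriction] assms dvvH_nonzero
    by (simp add: field_simps)
  show "ell (switch_map pencil_C pencil_D B_infty P) = ell P"
    and "dvH (switch_map pencil_C pencil_D B_infty P) = - dvH P"
    unfolding switch B_infty_line_coords using dvvH_nonzero by simp_all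
qed

lemma kahan_eq_iff_coords:
  "kahan_eq ell_ham_field P Z \<longleftrightarrow>
     ell Z - ell P = ell P * dvH Z + ell Z * dvH P \<and>
     dvH Z - dvH P = ell P * (\<gamma>\<^sub>1 * ell Z - \<kappa>) + ell Z * (\<gamma>\<^sub>1 * ell P - \<kappa>)"
proof -
  let ?R = "pt_add (pt_scale (ell P) (ham_field Z)) (pt_scale (ell Z) (ham_field P))"
  have "kahan_eq ell_ham_field P Z \<longleftrightarrow> pt_sub Z P = ?R"
    by (rule kahan_eq_product_field_iff[of _ _ _ 0 \<alpha> \<beta> a5 a2 a3 "-a4" "-a1" "-a2"])
      (auto simp: ell_ham_field_def ell_def ham_field_def)
  also have "\<dots> \<longleftrightarrow> ell (pt_sub (pt_sub Z P) ?R) = 0 \<and> dvH_lin (pt_sub (pt_sub Z P) ?R) = 0"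
    by (simp add: pt_eq_iff_pt_sub_zero[of "pt_sub Z P"] zero_iff_ell_dvH_lin)
  also have "ell (pt_sub (pt_sub Z P) ?R) = ell Z - ell P - (ell P * dvH Z + ell Z * dvH P)"
    by (simp add: dvH_def)
  also have "dvH_lin (pt_sub (pt_sub Z P) ?R)
      = dvH Z - dvH P - (ell P * (\<gamma>\<^sub>1 * ell Z - \<kappa>) + ell Z * (\<gamma>\<^sub>1 * ell P - \<kappa>))"
    by (simp add: dvH_lin_pt_sub dvH_lin_diff)
  finally show ?thesis by simp
qed

definition kahan_det :: "complex \<Rightarrow> complex \<Rightarrow> complex" where
  "kahan_det u w = 1 - w - 2*\<gamma>\<^sub>1*u^2 + \<kappa>*u"

lemma pencil_lin_kahan_det:
  "pencil_lin u w * kahan_det u w = 2 * pencil_quad u w * (w + \<gamma>\<^sub>1*u^2 - \<kappa>*u)"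
  unfolding pencil_lin_def pencil_quad_def kahan_det_def Dl_def conic_def by algebra

lemma B_zero_param_kahan_det:
  assumes "pencil_quad u w \<noteq> 0"
  shows "B_zero_param u w * kahan_det u w = - 2 * (w + \<gamma>\<^sub>1*u^2 - \<kappa>*u)"
  using pencil_lin_kahan_det[of u w] assms by (simp add: B_zero_param_def field_simps)

lemma kahan_eq_switch_composition:
  assumes "switch_defined pencil_C pencil_D B_zero P"
    and "switch_defined pencil_C pencil_D B_infty (switch_map pencil_C pencil_D B_zero P)"
  shows "kahan_eq ell_ham_field P
           (switch_map pencil_C pencil_D B_infty (switch_map pencil_C pencil_D B_zero P))"
proof -
  define u w where "u = ell P" and "w = dvH P"
  define t where "t = B_zero_param u w"
  let ?Z = "switch_map pencil_C pencil_D B_infty (switch_map pencil_C pencil_D B_zero P)"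
  have quad: "pencil_quad u w \<noteq> 0"
    using assms(1) by (simp add: switch_defined_B_zero_iff u_def w_def)
  have "ell ?Z = (1 - t) * u" and "dvH ?Z = - (w + t * (1 - w))"
    using assms(2) switch_map_B_zero_coords[OF quad[unfolded u_def w_def]]
    by (simp_all add: switch_defined_B_infty_iff switch_map_B_infty_coords t_def u_def w_def)
  moreover have "t * kahan_det u w = - 2 * (w + \<gamma>\<^sub>1*u^2 - \<kappa>*u)"
    unfolding t_def by (rule B_zero_param_kahan_det[OF quad])
  ultimately show ?thesis
    unfolding kahan_eq_iff_coords u_def[symmetric] w_def[symmetric] kahan_det_def by algebra
qed

lemma kahan_eq_unique:
  assumes "kahan_det (ell P) (dvH P) \<noteq> 0"
    and "kahan_eq ell_ham_field P Z" and "kahan_eq ell_ham_field P Z'"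
  shows "Z = Z'"
proof -
  have "kahan_det (ell P) (dvH P) * (ell Z - ell Z') = 0"
    and "dvH Z - dvH Z' = (ell Z - ell Z') * (2 * \<gamma>\<^sub>1 * ell P - \<kappa>)"
    using assms(2,3) unfolding kahan_eq_iff_coords kahan_det_def by algebra+
  then show ?thesis using assms(1) by (simp add: point_eq_iff_coords)
qed

definition D_image_numer :: "complex \<Rightarrow> complex \<Rightarrow> complex" where
  "D_image_numer u w = kahan_det u w ^ 2 - \<gamma>\<^sub>1 * u^2 * (1 + w - \<kappa>*u)^2"

lemma Dl_B_zero_image:
  assumes "pencil_quad u w \<noteq> 0"
  shows "Dl ((1 - B_zero_param u w) * u) * kahan_det u w ^ 2 = D_image_numer u w"
proof -
  have "(1 - B_zero_param u w) * kahan_det u w = 1 + w - \<kappa>*u"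
    using B_zero_param_kahan_det[OF assms] by (simp add: kahan_det_def algebra_simps)
  then show ?thesis unfolding Dl_def D_image_numer_def by algebra
qed

definition composition_domain :: "point set" where
  "composition_domain = {P. kahan_defined ell_ham_field P \<and> switch_defined pencil_C pencil_D B_zero P
     \<and> switch_defined pencil_C pencil_D B_infty (switch_map pencil_C pencil_D B_zero P)}"

lemma in_composition_domain:
  assumes "kahan_det (ell P) (dvH P) \<noteq> 0" and "pencil_quad (ell P) (dvH P) \<noteq> 0"
    and "D_image_numer (ell P) (dvH P) \<noteq> 0"
  shows "P \<in> composition_domain"
proof -
  have B_zero: "switch_defined pencil_C pencil_D B_zero P"
    using assms(2) by (simp add: switch_defined_B_zero_iff)
  have "Dl ((1 - B_zero_param (ell P) (dvH P)) * ell P) \<noteq> 0"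
    using Dl_B_zero_image[OF assms(2)] assms(3) by auto
  then have B_infty: "switch_defined pencil_C pencil_D B_infty (switch_map pencil_C pencil_D B_zero P)"
    by (simp add: switch_defined_B_infty_iff switch_map_B_zero_coords[OF assms(2)])
  have "kahan_defined ell_ham_field P"
    unfolding kahan_defined_def
    using kahan_eq_switch_composition[OF B_zero B_infty] kahan_eq_unique[OF assms(1)] by blast
  with B_zero B_infty show ?thesis by (simp add: composition_domain_def)
qed

lemma kahan_det_expand: "kahan_det u w = 0 * w^2 + (-1) * w + (1 - 2*\<gamma>\<^sub>1*u^2 + \<kappa>*u)"
  and pencil_quad_expand:
    "pencil_quad u w = 1 * w^2 + (- 2 * Dl u) * w + (Dl u * (1 - \<kappa>^2*u^2) - \<gamma>\<^sub>1*u^2*(1 - \<kappa>*u)^2)"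
  and D_image_numer_expand:
    "D_image_numer u w = Dl u * w^2 + (- 2 * (1 - 2*\<gamma>\<^sub>1*u^2 + \<kappa>*u + \<gamma>\<^sub>1*u^2*(1 - \<kappa>*u))) * w
       + ((1 - 2*\<gamma>\<^sub>1*u^2 + \<kappa>*u)^2 - \<gamma>\<^sub>1*u^2*(1 - \<kappa>*u)^2)"
  unfolding kahan_det_def pencil_quad_def D_image_numer_def Dl_def conic_def by algebra+

lemma pencil_D_nonzero_in_closure:
  assumes "pencil_D P \<noteq> 0"
  shows "P \<in> closure composition_domain"
proof (rule in_closure_if_finite_exceptions_on_line[where d = line_vec])
  define u w where "u = ell P" and "w = dvH P"
  let ?bad = "{w'. kahan_det u w' = 0} \<union> {w'. pencil_quad u w' = 0} \<union> {w'. D_image_numer u w' = 0}"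
  have "Dl u \<noteq> 0" using assms by (simp add: pencil_D_def u_def)
  then have "finite ?bad"
    by (auto intro: finite_zeros_quadratic kahan_det_expand pencil_quad_expand D_image_numer_expand)
  then have "finite ((\<lambda>s. w + s * dvvH) -` ?bad)"
    by (rule finite_vimageI) (use dvvH_nonzero in \<open>auto simp: inj_def\<close>)
  moreover have "{s. pt_add P (pt_scale s line_vec) \<notin> composition_domain} \<subseteq> (\<lambda>s. w + s * dvvH) -` ?bad"
  proof
    fix s assume "s \<in> {s. pt_add P (pt_scale s line_vec) \<notin> composition_domain}"
    then show "s \<in> (\<lambda>s. w + s * dvvH) -` ?bad"
      using in_composition_domain[of "pt_add P (pt_scale s line_vec)"]
      by (auto simp: dvH_pt_add u_def w_def algebra_simps)
  qed
  ultimately show "finite {s. pt_add P (pt_scale s line_vec) \<notin> composition_domain}"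
    by (rule finite_subset[rotated])
qed

lemma closure_composition_domain: "closure composition_domain = UNIV"
proof -
  have "ell (1, 0) \<noteq> 0 \<or> ell (0, 1) \<noteq> 0"
    using dvvH_nonzero by (auto simp: ell_def dvvH_def)
  then obtain d where d: "ell d \<noteq> 0" by blast
  have "P \<in> closure {P. pencil_D P \<noteq> 0}" for P
  proof (rule in_closure_if_finite_exceptions_on_line[where d = d])
    have "finite {u. Dl u = 0}"
      by (rule finite_zeros_quadratic[of _ "- \<gamma>\<^sub>1" 0 1]) (simp_all add: Dl_def)
    then have "finite ((\<lambda>s. ell P + s * ell d) -` {u. Dl u = 0})"
      by (rule finite_vimageI) (use d in \<open>auto simp: inj_def\<close>)
    then show "finite {s. pt_add P (pt_scale s d) \<notin> {P. pencil_D P \<noteq> 0}}"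
      by (simp add: pencil_D_def algebra_simps)
  qed
  then have "closure {P. pencil_D P \<noteq> 0} = UNIV" by auto
  moreover have "closure {P. pencil_D P \<noteq> 0} \<subseteq> closure composition_domain"
    using pencil_D_nonzero_in_closure by (intro closure_minimal) auto
  ultimately show ?thesis by auto
qed

lemma kahan_map_eq_switch_composition:
  assumes "P \<in> composition_domain"
  shows "kahan_map ell_ham_field P
    = switch_map pencil_C pencil_D B_infty (switch_map pencil_C pencil_D B_zero P)"
  using assms unfolding composition_domain_def by (auto intro: kahan_map_eqI kahan_eq_switch_composition)

lemma deriv_ham_snd: "deriv (\<lambda>t. ham (x, t)) y = fst (ham_field (x, y))"
  and deriv_ham_fst: "deriv (\<lambda>t. ham (t, y)) x = - snd (ham_field (x, y))"
  by (rule DERIV_imp_deriv; auto intro!: derivative_eq_intros simp: ham_def ham_field_def field_simps)+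

end

theorem theorem2:
  fixes \<alpha> \<beta> a1 a2 a3 a4 a5 :: complex
    and l H :: "complex \<Rightarrow> complex \<Rightarrow> complex"
    and f :: "point \<Rightarrow> point"
    and C D :: "point \<Rightarrow> complex"
  assumes not_both_zero: "\<alpha> \<noteq> 0 \<or> \<beta> \<noteq> 0"
  defines "l \<equiv> (\<lambda>x y. \<alpha> * x + \<beta> * y)"
  defines "H \<equiv> (\<lambda>x y. a1/2 * x^2 + a2 * x * y + a3/2 * y^2 + a4 * x + a5 * y)"
  defines "f \<equiv> (\<lambda>(x, y). (l x y * deriv (\<lambda>t. H x t) y, - (l x y * deriv (\<lambda>t. H t y) x)))"
  defines "\<gamma>1 \<equiv> a2^2 - a1 * a3"
  defines "\<gamma>2 \<equiv> a3 * a4^2 + a1 * a5^2 - 2 * a2 * a4 * a5"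
  defines "C \<equiv> (\<lambda>(x, y). H x y - \<gamma>2/2 * (l x y)^2)"
  defines "D \<equiv> (\<lambda>(x, y). 1 - \<gamma>1 * (l x y)^2)"
  defines "\<rho> \<equiv> (1 + (\<beta> * a4 - \<alpha> * a5)) / (\<beta>^2 * a1 - 2 * \<alpha> * \<beta> * a2 + \<alpha>^2 * a3)"
  defines "B0 \<equiv> (\<rho> * (-\<beta>), \<rho> * \<alpha>, 1)"
  defines "Binf \<equiv> (-\<beta>, \<alpha>, 0)"
  assumes rho_denom: "\<beta>^2 * a1 - 2 * \<alpha> * \<beta> * a2 + \<alpha>^2 * a3 \<noteq> 0"
  assumes C_nonsingular: "conic_nonsingular C"
  shows "(\<forall>P. kahan_defined f P \<and> switch_defined C D B0 P
              \<and> switch_defined C D Binf (switch_map C D B0 P) \<longrightarrow>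
            kahan_map f P = switch_map C D Binf (switch_map C D B0 P))
       \<and> closure {P. kahan_defined f P \<and> switch_defined C D B0 P
              \<and> switch_defined C D Binf (switch_map C D B0 P)} = UNIV"
proof -
  interpret ell_hamiltonian \<alpha> \<beta> a1 a2 a3 a4 a5
    using rho_denom by unfold_locales
  have H: "H x y = ham (x, y)" for x y
    by (simp add: H_def ham_def)
  have "f = ell_ham_field"
    by (auto simp: fun_eq_iff f_def H deriv_ham_fst deriv_ham_snd ell_ham_field_def pt_scale_def
        l_def ell_def)
  moreover have "C = pencil_C" and "D = pencil_D"
    by (auto simp: fun_eq_iff C_def D_def H l_def \<gamma>1_def \<gamma>2_def pencil_C_def pencil_D_def Dl_def
        ell_def \<gamma>\<^sub>1_def \<gamma>\<^sub>2_def)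
  moreover have "B0 = B_zero" and "Binf = B_infty"
    by (simp_all add: B0_def \<rho>_def B_zero_def \<rho>\<^sub>0_def dvvH_def Binf_def B_infty_def)
  ultimately show ?thesis
    using kahan_map_eq_switch_composition closure_composition_domain
    by (simp add: composition_domain_def)
qed

end
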